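(* Let $U=(E,\mathcal{D},\rho)$ be a U-matroid. If $A\in\mathcal{D}$ and $\rho(A)=|A|=\rho(E)$, then $A$ is a basis of $U$.
   Context: A U-matroid is a triple $(E,\mathcal{D},\rho)$ with $E$ finite, $\mathcal{D}\subseteq 2^E$ an accessible distributive lattice of sets, and $\rho:\mathcal{D}\to\mathbb{N}$ with $\rho(\emptyset)=0$, monotone, submodular, with unit increase. A basis of $U$ is the support of a vertex of the base polyhedron $\{\mathbf{x}\in\mathbb{R}^E:\mathbf{x}(A)\le\rho(A)\ \forall A\in\mathcal{D},\ \mathbf{x}(E)=\rho(E)\}$. *)

theory Defs
  imports Main "HOL-Analysis.Analysis"
begin

definition accessible_distributive_lattice :: "'a set \<Rightarrow> 'a set set \<Rightarrow> bool" where
  "accessible_distributive_lattice E D \<longleftrightarrow>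
     D \<subseteq> Pow E \<and> {} \<in> D \<and> E \<in> D \<and>
     (\<forall>A\<in>D. \<forall>B\<in>D. A \<union> B \<in> D \<and> A \<inter> B \<in> D) \<and>
     (\<forall>A\<in>D. A \<noteq> {} \<longrightarrow> (\<exists>a\<in>A. A - {a} \<in> D))"

definition U_matroid :: "'a set \<Rightarrow> 'a set set \<Rightarrow> ('a set \<Rightarrow> nat) \<Rightarrow> bool" where
  "U_matroid E D \<rho> \<longleftrightarrow>
     finite E \<and> accessible_distributive_lattice E D \<and>
     \<rho> {} = 0 \<and>
     (\<forall>A\<in>D. \<forall>B\<in>D. A \<subseteq> B \<longrightarrow> \<rho> A \<le> \<rho> B) \<and>
     (\<forall>A\<in>D. \<forall>B\<in>D. \<rho> (A \<union> B) + \<rho> (A \<inter> B) \<le> \<rho> A + \<rho> B) \<and>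
     (\<forall>A\<in>D. \<forall>B\<in>D. A \<subseteq> B \<and> card (B - A) = 1 \<longrightarrow> \<rho> B \<le> \<rho> A + 1)"

text \<open>Vectors in R^E are functions 'a \<Rightarrow> real vanishing outside E.\<close>

definition base_polyhedron :: "'a set \<Rightarrow> 'a set set \<Rightarrow> ('a set \<Rightarrow> nat) \<Rightarrow> ('a \<Rightarrow> real) set" where
  "base_polyhedron E D \<rho> =
     {x. (\<forall>e. e \<notin> E \<longrightarrow> x e = 0) \<and>
         (\<forall>A\<in>D. sum x A \<le> real (\<rho> A)) \<and> sum x E = real (\<rho> E)}"

definition vertex_of :: "('a \<Rightarrow> real) \<Rightarrow> ('a \<Rightarrow> real) set \<Rightarrow> bool" where
  "vertex_of x P \<longleftrightarrow> x \<in> P \<and>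
     (\<forall>y\<in>P. \<forall>z\<in>P. \<forall>t::real. 0 < t \<and> t < 1 \<and> x = (\<lambda>e. t * y e + (1 - t) * z e) \<longrightarrow> y = z)"

definition support :: "'a set \<Rightarrow> ('a \<Rightarrow> real) \<Rightarrow> 'a set" where
  "support E x = {e\<in>E. x e \<noteq> 0}"

definition U_basis :: "'a set \<Rightarrow> 'a set set \<Rightarrow> ('a set \<Rightarrow> nat) \<Rightarrow> 'a set \<Rightarrow> bool" where
  "U_basis E D \<rho> B \<longleftrightarrow>
     (\<exists>x. vertex_of x (base_polyhedron E D \<rho>) \<and> B = support E x)"

end

theory Submission
  imports Defs
begin

text \<open>Let \<open>x\<close> be the indicator vector of \<open>A\<close>. Peeling elements off \<open>A\<close> along the
  accessibility chain and using submodularity shows that every \<open>C \<in> D\<close> with \<open>C \<subseteq> A\<close>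
  satisfies \<open>\<rho> C = |C|\<close>; hence \<open>x(B) = |A \<inter> B| = \<rho>(A \<inter> B) \<le> \<rho>(B)\<close>, so \<open>x\<close> lies in
  the base polyhedron, and the constraints of \<open>A \<inter> B\<close> and of all supersets of \<open>A\<close> are
  tight at \<open>x\<close>. A point \<open>y\<close> of the polyhedron tight on these sets satisfies
  \<open>y(B) = x(B)\<close> for all \<open>B \<in> D\<close> by modularity of \<open>y(A \<union> B) + y(A \<inter> B)\<close>, and since the
  members of \<open>D\<close> are reached by adding one element at a time, \<open>y = x\<close>.\<close>

lemma convex_comb_eq_upper_bound:
  fixes a b r t :: real
  assumes "a \<le> r" "b \<le> r" "0 < t" "t < 1" "t * a + (1 - t) * b = r"
  shows "a = r"
proof (rule ccontr)
  assume "a \<noteq> r"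
  with assms have "t * a < t * r" by simp
  moreover have "(1 - t) * b \<le> (1 - t) * r"
    using assms by (intro mult_left_mono) auto
  ultimately have "t * a + (1 - t) * b < t * r + (1 - t) * r" by linarith
  also have "\<dots> = r" by (simp add: algebra_simps)
  finally show False
    using assms(5) by simp
qed

lemma vertex_of_base_polyhedronI:
  assumes x: "x \<in> base_polyhedron E D \<rho>"
    and unique: "\<And>y. y \<in> base_polyhedron E D \<rho> \<Longrightarrow>
      (\<And>B. B \<in> D \<Longrightarrow> sum x B = \<rho> B \<Longrightarrow> sum y B = \<rho> B) \<Longrightarrow> y = x"
  shows "vertex_of x (base_polyhedron E D \<rho>)"
  unfolding vertex_of_def
proof (intro conjI ballI allI impI)
  fix y z and t :: real
  assume y: "y \<in> base_polyhedron E D \<rho>" and z: "z \<in> base_polyhedron E D \<rho>"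
    and yz: "0 < t \<and> t < 1 \<and> x = (\<lambda>e. t * y e + (1 - t) * z e)"
  have comb: "sum x B = t * sum y B + (1 - t) * sum z B" for B
    using yz by (simp add: sum.distrib sum_distrib_left)
  have y_le: "sum y B \<le> \<rho> B" and z_le: "sum z B \<le> \<rho> B" if "B \<in> D" for B
    using y z that unfolding base_polyhedron_def by auto
  have "y = x"
  proof (rule unique[OF y])
    fix B assume "B \<in> D" "sum x B = \<rho> B"
    then show "sum y B = \<rho> B"
      using convex_comb_eq_upper_bound[OF y_le z_le] comb yz by metis
  qed
  moreover have "z = x"
  proof (rule unique[OF z])
    fix B assume "B \<in> D" "sum x B = \<rho> B"
    then show "sum z B = \<rho> B"
      using convex_comb_eq_upper_bound[OF z_le y_le, of B "1 - t"] comb yz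
      by (simp add: add.commute)
  qed
  ultimately show "y = z" by simp
qed (use x in simp)

locale u_matroid =
  fixes E :: "'a set" and D :: "'a set set" and \<rho> :: "'a set \<Rightarrow> nat"
  assumes U_matroid: "U_matroid E D \<rho>"
begin

lemma finite_E: "finite E"
  and sets_subset_Pow: "D \<subseteq> Pow E"
  and E_in: "E \<in> D"
  and Un_in: "A \<in> D \<Longrightarrow> B \<in> D \<Longrightarrow> A \<union> B \<in> D"
  and Int_in: "A \<in> D \<Longrightarrow> B \<in> D \<Longrightarrow> A \<inter> B \<in> D"
  and accessible: "A \<in> D \<Longrightarrow> A \<noteq> {} \<Longrightarrow> \<exists>a\<in>A. A - {a} \<in> D"
  and rank_empty: "\<rho> {} = 0"
  and rank_mono: "A \<in> D \<Longrightarrow> B \<in> D \<Longrightarrow> A \<subseteq> B \<Longrightarrow> \<rho> A \<le> \<rho> B"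
  and rank_submodular: "A \<in> D \<Longrightarrow> B \<in> D \<Longrightarrow> \<rho> (A \<union> B) + \<rho> (A \<inter> B) \<le> \<rho> A + \<rho> B"
  and rank_unit_increase:
    "A \<in> D \<Longrightarrow> B \<in> D \<Longrightarrow> A \<subseteq> B \<Longrightarrow> card (B - A) = 1 \<Longrightarrow> \<rho> B \<le> \<rho> A + 1"
  using U_matroid unfolding U_matroid_def accessible_distributive_lattice_def by simp_all

lemma subset_E: "B \<in> D \<Longrightarrow> B \<subseteq> E"
  using sets_subset_Pow by blast

lemma finite_member: "B \<in> D \<Longrightarrow> finite B"
  using finite_E subset_E finite_subset by blast

lemma accessible_induct[consumes 1, case_names empty remove]:
  assumes "B \<in> D"
    and empty: "P {}"
    and remove: "\<And>B b. B \<in> D \<Longrightarrow> b \<in> B \<Longrightarrow> B - {b} \<in> D \<Longrightarrow> P (B - {b}) \<Longrightarrow> P B"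
  shows "P B"
  using assms(1)
proof (induction "card B" arbitrary: B rule: less_induct)
  case less
  show ?case
  proof (cases "B = {}")
    case True
    with empty show ?thesis by simp
  next
    case False
    with accessible[OF less.prems] obtain b where b: "b \<in> B" "B - {b} \<in> D"
      by blast
    have "card (B - {b}) < card B"
      using b finite_member[OF less.prems] by (meson card_Diff1_less)
    with less b show ?thesis
      using remove by blast
  qed
qed

lemma rank_le_remove_plus_one:
  assumes "B \<in> D" "b \<in> B" "B - {b} \<in> D"
  shows "\<rho> B \<le> \<rho> (B - {b}) + 1"
proof -
  have "B - (B - {b}) = {b}" using assms(2) by auto
  then show ?thesis
    using rank_unit_increase[OF assms(3,1)] by auto
qed

lemma card_remove_plus_one: "B \<in> D \<Longrightarrow> b \<in> B \<Longrightarrow> card (B - {b}) + 1 = card B"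
  using finite_member by (metis Suc_eq_plus1 card_Suc_Diff1)

lemma rank_le_card: "B \<in> D \<Longrightarrow> \<rho> B \<le> card B"
proof (induction B rule: accessible_induct)
  case empty
  then show ?case by (simp add: rank_empty)
next
  case (remove B b)
  then show ?case
    using rank_le_remove_plus_one card_remove_plus_one by fastforce
qed

lemma rank_eq_card_subset:
  assumes "A \<in> D" "\<rho> A = card A" "C \<in> D" "C \<subseteq> A"
  shows "\<rho> C = card C"
  using assms
proof (induction A arbitrary: C rule: accessible_induct)
  case empty
  then show ?case by (simp add: rank_empty)
next
  case (remove A b)
  have rank_A': "\<rho> (A - {b}) = card (A - {b})"
    using rank_le_remove_plus_one[OF remove.hyps] rank_le_card[OF remove.hyps(3)]
      card_remove_plus_one[OF remove.hyps(1,2)] remove.prems(1)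
    by linarith
  show ?case
  proof (cases "b \<in> C")
    case False
    with remove rank_A' show ?thesis by blast
  next
    case True
    have Int: "C \<inter> (A - {b}) = C - {b}" and Un: "C \<union> (A - {b}) = A"
      using remove.prems(3) True remove.hyps(2) by auto
    have "\<rho> (C - {b}) = card (C - {b})"
      using remove.IH[OF rank_A'] Int_in[OF remove.prems(2) remove.hyps(3)] Int
        remove.prems(3) by auto
    moreover have "\<rho> A + \<rho> (C - {b}) \<le> \<rho> C + \<rho> (A - {b})"
      using rank_submodular[OF remove.prems(2) remove.hyps(3)] Int Un by simp
    moreover have "card (C - {b}) + 1 = card C"
      using card_remove_plus_one[OF remove.prems(2) True] .
    ultimately show ?thesis
      using rank_le_card[OF remove.prems(2)] rank_A' remove.prems(1)
        card_remove_plus_one[OF remove.hyps(1,2)]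
      by linarith
  qed
qed

lemma eq_if_sums_eq:
  fixes x y :: "'a \<Rightarrow> real"
  assumes sums: "\<And>B. B \<in> D \<Longrightarrow> sum y B = sum x B" and "e \<in> E"
  shows "y e = x e"
proof -
  have "\<forall>e\<in>B. y e = x e" if "B \<in> D" for B
    using that
  proof (induction B rule: accessible_induct)
    case empty
    then show ?case by simp
  next
    case (remove B b)
    have "sum y (B - {b}) = sum x (B - {b})"
      using remove.IH by (intro sum.cong) auto
    moreover have "sum y B = y b + sum y (B - {b})" "sum x B = x b + sum x (B - {b})"
      using remove.hyps(2) finite_member[OF remove.hyps(1)] by (simp_all add: sum.remove)
    ultimately have "y b = x b"
      using sums[OF remove.hyps(1)] by linarith
    with remove.IH show ?case by auto
  qed
  with E_in \<open>e \<in> E\<close> show ?thesis by blast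
qed

lemma sum_indicator:
  "B \<in> D \<Longrightarrow> (\<Sum>e\<in>B. indicator A e :: real) = card (A \<inter> B)"
  using finite_member unfolding indicator_def by (simp add: sum.If_cases Int_commute)

lemma indicator_outside_E: "A \<in> D \<Longrightarrow> e \<notin> E \<Longrightarrow> indicator A e = 0"
  using subset_E unfolding indicator_def by auto

context
  fixes A :: "'a set"
  assumes A_in: "A \<in> D" and rank_A: "\<rho> A = card A" and card_A: "card A = \<rho> E"
begin

abbreviation x\<^sub>A :: "'a \<Rightarrow> real" where "x\<^sub>A \<equiv> indicator A"

lemma sum_indicator_Int: "B \<in> D \<Longrightarrow> sum x\<^sub>A (A \<inter> B) = \<rho> (A \<inter> B)"
  using rank_eq_card_subset[OF A_in rank_A Int_in[OF A_in]] sum_indicator[OF Int_in[OF A_in]]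
  by simp

lemma sum_indicator_superset:
  assumes "B \<in> D" "A \<subseteq> B"
  shows "sum x\<^sub>A B = \<rho> B"
proof -
  have "\<rho> A \<le> \<rho> B" "\<rho> B \<le> \<rho> E"
    using rank_mono[OF A_in assms(1,2)] rank_mono[OF assms(1) E_in subset_E[OF assms(1)]] .
  then have "\<rho> B = card A"
    using rank_A card_A by simp
  with sum_indicator[OF assms(1)] assms(2) show ?thesis
    by (simp add: Int_absorb2)
qed

lemma indicator_in_base_polyhedron: "x\<^sub>A \<in> base_polyhedron E D \<rho>"
  unfolding base_polyhedron_def
proof (intro CollectI conjI allI impI ballI)
  fix B assume "B \<in> D"
  have "sum x\<^sub>A B = sum x\<^sub>A (A \<inter> B)"
    using sum_indicator \<open>B \<in> D\<close> Int_in[OF A_in] by (simp add: Int_left_absorb)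
  also have "\<dots> = \<rho> (A \<inter> B)" using sum_indicator_Int[OF \<open>B \<in> D\<close>] .
  also have "\<dots> \<le> \<rho> B" using rank_mono[OF Int_in[OF A_in \<open>B \<in> D\<close>] \<open>B \<in> D\<close>] by simp
  finally show "sum x\<^sub>A B \<le> \<rho> B" .
qed (simp_all add: indicator_outside_E[OF A_in] sum_indicator_superset[OF E_in subset_E[OF A_in]])

lemma unique_on_tight_face:
  assumes y: "y \<in> base_polyhedron E D \<rho>"
    and tight: "\<And>B. B \<in> D \<Longrightarrow> sum x\<^sub>A B = \<rho> B \<Longrightarrow> sum y B = \<rho> B"
  shows "y = x\<^sub>A"
proof -
  have sums: "sum y B = sum x\<^sub>A B" if "B \<in> D" for B
  proof -
    have same: "sum y C = sum x\<^sub>A C" if "C \<in> D" "sum x\<^sub>A C = \<rho> C" for C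
      using tight that by simp
    have "sum y (A \<inter> B) = sum x\<^sub>A (A \<inter> B)"
      using same Int_in[OF A_in that] sum_indicator_Int[OF that] by simp
    moreover have "sum y (A \<union> B) = sum x\<^sub>A (A \<union> B)" "sum y A = sum x\<^sub>A A"
      using same[OF Un_in[OF A_in that] sum_indicator_superset[OF Un_in[OF A_in that]]]
        same[OF A_in sum_indicator_superset[OF A_in]] by auto
    moreover note modular = sum.union_inter[OF finite_member[OF A_in] finite_member[OF that]]
    ultimately show ?thesis
      using modular[of y] modular[of x\<^sub>A] by linarith
  qed
  show ?thesis
  proof
    fix e
    show "y e = x\<^sub>A e"
    proof (cases "e \<in> E")
      case True
      with eq_if_sums_eq[OF sums] show ?thesis by blast
    next
      case False
      with y show ?thesis
        unfolding base_polyhedron_def by (simp add: indicator_outside_E[OF A_in])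
    qed
  qed
qed

lemma vertex_indicator: "vertex_of x\<^sub>A (base_polyhedron E D \<rho>)"
  using vertex_of_base_polyhedronI indicator_in_base_polyhedron unique_on_tight_face by metis

end

end

theorem corollary3p7:
  fixes E :: "'a set" and D :: "'a set set" and \<rho> :: "'a set \<Rightarrow> nat" and A :: "'a set"
  assumes "U_matroid E D \<rho>"
    and "A \<in> D"
    and "\<rho> A = card A"
    and "card A = \<rho> E"
  shows "U_basis E D \<rho> A"
proof -
  interpret u_matroid E D \<rho> by unfold_locales fact
  have "vertex_of (indicator A) (base_polyhedron E D \<rho>)"
    using vertex_indicator assms(2-4) .
  moreover have "support E (indicator A) = A"
    using subset_E[OF assms(2)] unfolding support_def by (auto simp: indicator_eq_0_iff)
  ultimately show ?thesis
    unfolding U_basis_def by metis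
qed

end
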